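(* Suppose $\mathrm{char}(k)\ne2$ ($k$ algebraically closed). The set $\mathscr{X}_2$ of isogeny classes of non-degenerate quadratic spaces of countable dimension has exactly one element.
   Context: A quadratic space is a $k$-vector space $V$ together with $q\in P_2(V)$, a degree-$2$ polynomial function on $V$ (in dual coordinates to a basis, a formal, possibly infinite, $k$-linear combination of degree-$2$ monomials). The strength of $q$ is the least $s$ with $q=\sum_{i=1}^s g_ih_i$ for linear forms $g_i,h_i$ ($\infty$ if none exists); $(V,q)$ is non-degenerate if $q$ has infinite strength. An embedding $(W,q')\to(V,q)$ is a $k$-linear map $\phi:W\to V$ with $q\circ\phi=q'$; two quadratic spaces are isogenous if each embeds into the other. *)

theory Defs
  imports "HOL-Computational_Algebra.Polynomial" "HOL-Library.Extended_Nat"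
begin

definition is_basis :: "('k::field \<Rightarrow> 'v::ab_group_add \<Rightarrow> 'v) \<Rightarrow> 'v set \<Rightarrow> bool" where
  "is_basis s B \<longleftrightarrow> \<not> module.dependent s B \<and> module.span s B = UNIV"

definition countable_dim :: "('k::field \<Rightarrow> 'v::ab_group_add \<Rightarrow> 'v) \<Rightarrow> bool" where
  "countable_dim s \<longleftrightarrow> (\<exists>B. is_basis s B \<and> countable B)"

definition linear_form :: "('k::field \<Rightarrow> 'v::ab_group_add \<Rightarrow> 'v) \<Rightarrow> ('v \<Rightarrow> 'k) \<Rightarrow> bool" where
  "linear_form s g \<longleftrightarrow> Vector_Spaces.linear s ((*)) g"

text \<open>P_2(V): in dual coordinates x_b (b in a basis B), q is a formal (possibly infinite)
  linear combination of degree-2 monomials x_b x_c; evaluated at v it is a finite sum,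
  since only finitely many coordinates of v are nonzero.\<close>
definition P2 :: "('k::field \<Rightarrow> 'v::ab_group_add \<Rightarrow> 'v) \<Rightarrow> ('v \<Rightarrow> 'k) \<Rightarrow> bool" where
  "P2 s q \<longleftrightarrow> (\<exists>B c. is_basis s B \<and>
     (\<forall>v. q v = (\<Sum>(b1, b2) \<in> {b. module.representation s B v b \<noteq> 0} \<times>
                                  {b. module.representation s B v b \<noteq> 0}.
            c b1 b2 * module.representation s B v b1 * module.representation s B v b2)))"

definition quadratic_space :: "('k::field \<Rightarrow> 'v::ab_group_add \<Rightarrow> 'v) \<Rightarrow> ('v \<Rightarrow> 'k) \<Rightarrow> bool" where
  "quadratic_space s q \<longleftrightarrow> vector_space s \<and> P2 s q"

definition strength_le :: "('k::field \<Rightarrow> 'v::ab_group_add \<Rightarrow> 'v) \<Rightarrow> ('v \<Rightarrow> 'k) \<Rightarrow> nat \<Rightarrow> bool" where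
  "strength_le s q n \<longleftrightarrow> (\<exists>g h :: nat \<Rightarrow> 'v \<Rightarrow> 'k.
      (\<forall>i<n. linear_form s (g i) \<and> linear_form s (h i)) \<and>
      (\<forall>v. q v = (\<Sum>i<n. g i v * h i v)))"

definition strength :: "('k::field \<Rightarrow> 'v::ab_group_add \<Rightarrow> 'v) \<Rightarrow> ('v \<Rightarrow> 'k) \<Rightarrow> enat" where
  "strength s q = (if \<exists>n. strength_le s q n then enat (LEAST n. strength_le s q n) else \<infinity>)"

definition nondegenerate :: "('k::field \<Rightarrow> 'v::ab_group_add \<Rightarrow> 'v) \<Rightarrow> ('v \<Rightarrow> 'k) \<Rightarrow> bool" where
  "nondegenerate s q \<longleftrightarrow> strength s q = \<infinity>"

definition embeds ::
  "('k::field \<Rightarrow> 'w::ab_group_add \<Rightarrow> 'w) \<Rightarrow> ('w \<Rightarrow> 'k) \<Rightarrow>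
   ('k \<Rightarrow> 'v::ab_group_add \<Rightarrow> 'v) \<Rightarrow> ('v \<Rightarrow> 'k) \<Rightarrow> bool" where
  "embeds sW q' sV q \<longleftrightarrow> (\<exists>\<phi>. Vector_Spaces.linear sW sV \<phi> \<and> q \<circ> \<phi> = q')"

definition isogenous ::
  "('k::field \<Rightarrow> 'w::ab_group_add \<Rightarrow> 'w) \<Rightarrow> ('w \<Rightarrow> 'k) \<Rightarrow>
   ('k \<Rightarrow> 'v::ab_group_add \<Rightarrow> 'v) \<Rightarrow> ('v \<Rightarrow> 'k) \<Rightarrow> bool" where
  "isogenous sW q' sV q \<longleftrightarrow> embeds sW q' sV q \<and> embeds sV q sW q'"

end

theory Submission
  imports Defs
begin

text \<open>Over a field with square roots and \<open>2 \<noteq> 0\<close>, a quadratic form of infinite strength contains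
  an infinite family of mutually orthogonal hyperbolic planes: if a form had no hyperbolic plane
  orthogonal to finitely many given ones, then on their orthogonal complement it would be a
  square of a linear form or zero, and the form itself would have finite strength. Conversely,
  such a family forces infinite strength. Inside a hyperbolic family any symmetric Gram matrix on
  countably many vectors can be realised, so every countable-dimensional quadratic space embeds
  into every non-degenerate one; the form \<open>x\<^sub>0 x\<^sub>1 + x\<^sub>2 x\<^sub>3 + \<dots>\<close> on \<open>k[t]\<close> shows that
  the isogeny class is non-empty.\<close>

lemma vector_space_mult: "vector_space ((*) :: 'k::field \<Rightarrow> 'k \<Rightarrow> 'k)"
  by unfold_locales (auto simp: algebra_simps)

lemma linear_formI:
  assumes "vector_space s" "\<And>x y. g (x + y) = g x + g y" "\<And>t x. g (s t x) = t * g x"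
  shows "linear_form s g"
  using assms vector_space_mult by (simp add: linear_form_def Vector_Spaces.linear_iff)

lemma linear_form_imp_module_hom: "linear_form s g \<Longrightarrow> module_hom s (*) g"
  by (simp add: linear_form_def module_hom_iff_linear)

lemmas linear_form_add = module_hom.add[OF linear_form_imp_module_hom]
lemmas linear_form_scale = module_hom.scale[OF linear_form_imp_module_hom]
lemmas linear_form_sum = module_hom.sum[OF linear_form_imp_module_hom]

lemma strength_le_zero: "strength_le s (\<lambda>x. 0) 0"
  unfolding strength_le_def by auto

lemma strength_le_mult:
  "linear_form s g \<Longrightarrow> linear_form s h \<Longrightarrow> strength_le s (\<lambda>x. g x * h x) 1"
  unfolding strength_le_def by (intro exI[of _ "\<lambda>_. g"] exI[of _ "\<lambda>_. h"]) auto

lemma strength_le_add: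
  assumes "strength_le s q1 n1" "strength_le s q2 n2"
  shows "strength_le s (\<lambda>x. q1 x + q2 x) (n1 + n2)"
proof -
  obtain g1 h1 where 1: "\<forall>i<n1. linear_form s (g1 i) \<and> linear_form s (h1 i)"
     "\<forall>v. q1 v = (\<Sum>i<n1. g1 i v * h1 i v)" using assms(1) unfolding strength_le_def by blast
  obtain g2 h2 where 2: "\<forall>i<n2. linear_form s (g2 i) \<and> linear_form s (h2 i)"
     "\<forall>v. q2 v = (\<Sum>i<n2. g2 i v * h2 i v)" using assms(2) unfolding strength_le_def by blast
  define g where "g i = (if i < n1 then g1 i else g2 (i - n1))" for i
  define h where "h i = (if i < n1 then h1 i else h2 (i - n1))" for i
  have "(\<Sum>i<n1 + m. g i v * h i v) = (\<Sum>i<n1. g1 i v * h1 i v) + (\<Sum>i<m. g2 i v * h2 i v)" for m v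
    by (induction m) (auto simp: g_def h_def)
  with 1 2 show ?thesis
    unfolding strength_le_def by (intro exI[of _ g] exI[of _ h]) (auto simp: g_def h_def)
qed

lemma strength_le_sum:
  assumes "\<And>i. i < n \<Longrightarrow> strength_le s (q i) m"
  shows "strength_le s (\<lambda>x. \<Sum>i<n. q i x) (n * m)"
  using assms
proof (induction n)
  case 0
  then show ?case using strength_le_zero by simp
next
  case (Suc n)
  have "strength_le s (\<lambda>x. (\<Sum>i<n. q i x) + q n x) (n * m + m)"
    by (rule strength_le_add) (use Suc in auto)
  then show ?case by (simp add: add.commute)
qed

lemma nondegenerate_iff: "nondegenerate s q \<longleftrightarrow> (\<forall>n. \<not> strength_le s q n)"
  by (simp add: nondegenerate_def strength_def)

lemma homogeneous_system_nontrivial_solution: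
  fixes M :: "nat \<Rightarrow> 'i \<Rightarrow> 'k::field"
  assumes "finite I" "card I > m"
  shows "\<exists>a. (\<exists>i\<in>I. a i \<noteq> 0) \<and> (\<forall>j<m. (\<Sum>i\<in>I. M j i * a i) = 0)"
  using assms
proof (induction m arbitrary: I M)
  case 0
  then obtain i where "i \<in> I" by fastforce
  then show ?case by (intro exI[of _ "\<lambda>_. 1"]) auto
next
  case (Suc m)
  show ?case
  proof (cases "\<forall>i\<in>I. M m i = 0")
    case True
    with Suc show ?thesis by (auto simp: less_Suc_eq)
  next
    case False
    then obtain p where p: "p \<in> I" "M m p \<noteq> 0" by auto
    define I' where "I' = I - {p}"
    have I: "I = insert p I'" "p \<notin> I'" "finite I'" "card I' > m"
      using Suc.prems p by (auto simp: I'_def)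
    \<comment> \<open>eliminate the unknown \<open>p\<close> using the last equation\<close>
    define M' where "M' j i = M j i - M j p * M m i / M m p" for j i
    obtain a' where a': "\<exists>i\<in>I'. a' i \<noteq> 0" "\<forall>j<m. (\<Sum>i\<in>I'. M' j i * a' i) = 0"
      using Suc.IH[OF I(3,4)] by blast
    define S where "S = (\<Sum>i\<in>I'. M m i * a' i)"
    define a where "a = a'(p := - S / M m p)"
    have sum_I: "(\<Sum>i\<in>I. M j i * a i) = M j p * a p + (\<Sum>i\<in>I'. M j i * a' i)" for j
      using I by (simp add: a_def) (rule sum.cong; auto)
    have "(\<Sum>i\<in>I. M j i * a i) = 0" if "j < Suc m" for j
    proof (cases "j = m")
      case True
      then show ?thesis using p(2) unfolding sum_I by (simp add: a_def S_def)
    next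
      case False
      with that a'(2) have "(\<Sum>i\<in>I'. M' j i * a' i) = 0" by auto
      moreover have "(\<Sum>i\<in>I'. M' j i * a' i) = (\<Sum>i\<in>I'. M j i * a' i) - M j p / M m p * S"
        by (simp add: M'_def S_def algebra_simps sum_subtractf sum_distrib_left sum_divide_distrib)
      ultimately show ?thesis using p(2) unfolding sum_I by (simp add: a_def field_simps)
    qed
    moreover have "\<exists>i\<in>I. a i \<noteq> 0" using a'(1) I by (auto simp: a_def)
    ultimately show ?thesis by blast
  qed
qed

locale symmetric_bilinear_form =
  vector_space s for s :: "'k::field \<Rightarrow> 'v::ab_group_add \<Rightarrow> 'v" (infixr "*s" 75) +
  fixes B :: "'v \<Rightarrow> 'v \<Rightarrow> 'k"
  assumes add_left: "B (x + y) z = B x z + B y z"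
    and scale_left: "B (t *s x) y = t * B x y"
    and symmetric: "B x y = B y x"
begin

lemma add_right: "B x (y + z) = B x y + B x z"
  by (metis add_left symmetric)

lemma scale_right: "B x (t *s y) = t * B x y"
  by (metis scale_left symmetric)

lemma zero_left [simp]: "B 0 y = 0" and zero_right [simp]: "B x 0 = 0"
  using scale_left[of 0 0 y] scale_right[of x 0 0] by auto

lemma diff_left: "B (x - y) z = B x z - B y z" and diff_right: "B x (y - z) = B x y - B x z"
  using add_left[of "x - y" y z] add_right[of x "y - z" z] by (simp_all add: algebra_simps)

lemma sum_left: "B (\<Sum>i\<in>I. f i) y = (\<Sum>i\<in>I. B (f i) y)"
  by (induction I rule: infinite_finite_induct) (auto simp: add_left)

lemma sum_right: "B y (\<Sum>i\<in>I. f i) = (\<Sum>i\<in>I. B y (f i))"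
  by (induction I rule: infinite_finite_induct) (auto simp: add_right)

lemmas expand = add_left add_right scale_left scale_right diff_left diff_right sum_left sum_right

lemma diag_add: "B (x + y) (x + y) = B x x + 2 * B x y + B y y"
  by (simp add: add_left add_right symmetric[of y x])

lemma linear_form_left: "linear_form (*s) (\<lambda>x. B x y)"
  by (rule linear_formI) (auto simp: expand intro: vector_space_axioms)

definition orthogonal :: "'v set \<Rightarrow> 'v set" where
  "orthogonal S = {x. \<forall>y\<in>S. B x y = 0}"

definition hyperbolic_on :: "nat set \<Rightarrow> (nat \<Rightarrow> 'v) \<Rightarrow> (nat \<Rightarrow> 'v) \<Rightarrow> bool" where
  "hyperbolic_on I e f \<longleftrightarrow> (\<forall>i\<in>I. \<forall>j\<in>I.
     B (e i) (e j) = 0 \<and> B (f i) (f j) = 0 \<and> B (e i) (f j) = of_bool (i = j))"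

lemma subspace_orthogonal: "subspace (orthogonal S)"
  by (auto simp: subspace_def orthogonal_def expand)

lemma hyperbolic_onI:
  assumes "\<And>m. m \<in> I \<Longrightarrow> B (e m) (e m) = 0 \<and> B (f m) (f m) = 0 \<and> B (e m) (f m) = 1"
    and "\<And>m i. m \<in> I \<Longrightarrow> i \<in> I \<Longrightarrow> i < m \<Longrightarrow>
           B (e m) (e i) = 0 \<and> B (e m) (f i) = 0 \<and> B (f m) (e i) = 0 \<and> B (f m) (f i) = 0"
  shows "hyperbolic_on I e f"
  unfolding hyperbolic_on_def
proof (intro ballI)
  fix i j assume "i \<in> I" "j \<in> I"
  then consider "i = j" | "i < j" | "j < i" by fastforce
  then show "B (e i) (e j) = 0 \<and> B (f i) (f j) = 0 \<and> B (e i) (f j) = of_bool (i = j)"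
  proof cases
    case 2
    with assms(2)[OF \<open>j \<in> I\<close> \<open>i \<in> I\<close>] show ?thesis
      by (simp add: symmetric[of "e j"] symmetric[of "f j"])
  qed (use assms \<open>i \<in> I\<close> \<open>j \<in> I\<close> in auto)
qed

text \<open>A quadratic form containing an infinite family of hyperbolic planes has infinite strength:
  if \<open>q = \<Sum>j<n. g\<^sub>j h\<^sub>j\<close>, some nonzero \<open>u\<close> in the isotropic span of \<open>E 0, \<dots>, E (2n)\<close> is
  killed by all \<open>2n\<close> forms, so \<open>q (u + F k) = q (F k)\<close>, whereas \<open>B u (F k) \<noteq> 0\<close>.\<close>
lemma nondegenerate_if_hyperbolic_family:
  assumes two: "(2::'k) \<noteq> 0" and hyp: "hyperbolic_on UNIV E F"
  shows "nondegenerate (*s) (\<lambda>x. B x x)"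
  unfolding nondegenerate_iff
proof (intro allI notI)
  fix n assume "strength_le (*s) (\<lambda>x. B x x) n"
  then obtain g h where lf: "\<And>j. j < n \<Longrightarrow> linear_form (*s) (g j) \<and> linear_form (*s) (h j)"
    and q: "\<And>v. B v v = (\<Sum>j<n. g j v * h j v)"
    unfolding strength_le_def by blast
  define l where "l j = (if j < n then g j else h (j - n))" for j
  obtain a where a: "\<exists>k\<in>{..2*n}. a k \<noteq> 0" "\<forall>j<2*n. (\<Sum>i\<in>{..2*n}. l j (E i) * a i) = 0"
    using homogeneous_system_nontrivial_solution[of "{..2*n}" "2*n" "\<lambda>j i. l j (E i)"] by auto
  then obtain k where k: "k \<le> 2*n" "a k \<noteq> 0" by auto
  define u where "u = (\<Sum>i\<in>{..2*n}. a i *s E i)"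
  have lu: "l j u = 0" if "j < 2*n" for j
  proof -
    have "linear_form (*s) (l j)" using lf that by (auto simp: l_def)
    then have "l j u = (\<Sum>i\<in>{..2*n}. l j (E i) * a i)"
      by (simp add: u_def linear_form_sum linear_form_scale mult.commute)
    with a(2) that show ?thesis by simp
  qed
  have "B (u + F k) (u + F k) = B (F k) (F k)"
  proof -
    have "g j (u + F k) * h j (u + F k) = g j (F k) * h j (F k)" if "j < n" for j
      using lf[OF that] lu[of j] lu[of "n + j"] that by (auto simp: l_def linear_form_add)
    then show ?thesis by (simp add: q)
  qed
  moreover have "B u u = 0" and "B u (F k) = a k"
    using k hyp by (simp_all add: u_def expand hyperbolic_on_def)
  ultimately have "2 * a k = 0" by (simp add: diag_add)
  with two k show False by simp
qed

lemma hyperbolic_pair_from_isotropic: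
  assumes two: "(2::'k) \<noteq> 0" and K: "subspace K" "a \<in> K" "b \<in> K"
    and "B a a = 0" "B a b \<noteq> 0"
  shows "\<exists>b'\<in>K. B b' b' = 0 \<and> B a b' = 1"
proof -
  define b1 where "b1 = (1 / B a b) *s b"
  define b' where "b' = b1 + (- B b1 b1 / 2) *s a"
  have ab1: "B a b1 = 1" using assms by (simp add: b1_def expand)
  then have "B b' b' = 0" using assms by (simp add: b'_def diag_add expand symmetric[of b1 a])
  moreover have "B a b' = 1" using assms ab1 by (simp add: b'_def expand)
  moreover have "b' \<in> K" unfolding b'_def b1_def using K by (intro subspace_add subspace_scale)
  ultimately show ?thesis by blast
qed

text \<open>If \<open>B c c \<noteq> 0\<close> and some \<open>x\<close> violated the identity, the line through \<open>x\<close> in direction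
  \<open>c\<close> would contain an isotropic vector not orthogonal to \<open>c\<close>: solve the quadratic equation
  \<open>B (x - t *s c) (x - t *s c) = 0\<close> for \<open>t\<close>.\<close>
lemma diag_eq_square_if_isotropic_orthogonal:
  assumes sqrt: "\<And>d::'k. \<exists>r. r * r = d"
    and K: "subspace K" "c \<in> K" "x \<in> K" and c: "B c c \<noteq> 0"
    and iso: "\<And>a. a \<in> K \<Longrightarrow> B a a = 0 \<Longrightarrow> B a c = 0"
  shows "B x x * B c c = B x c * B x c"
proof -
  define \<beta> where "\<beta> = B x c"
  define \<gamma> where "\<gamma> = B c c"
  obtain r where r: "r * r = \<beta> * \<beta> - \<gamma> * B x x" using sqrt by blast
  define t where "t = (\<beta> + r) / \<gamma>"
  define a where "a = x - t *s c"
  have tg: "t * \<gamma> = \<beta> + r" using c by (simp add: t_def \<gamma>_def)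
  have Baa: "B a a = B x x - 2 * t * \<beta> + t * t * \<gamma>"
    by (simp add: a_def expand \<beta>_def \<gamma>_def symmetric[of c x] algebra_simps)
  have "B a a * \<gamma> = B x x * \<gamma> - 2 * (t * \<gamma>) * \<beta> + (t * \<gamma>) * (t * \<gamma>)"
    by (simp add: Baa algebra_simps)
  also have "\<dots> = B x x * \<gamma> - \<beta> * \<beta> + r * r" unfolding tg by (simp add: algebra_simps)
  also have "\<dots> = 0" by (simp add: r algebra_simps)
  finally have "B a a = 0" using c by (simp add: \<gamma>_def)
  moreover have "a \<in> K" using K by (simp add: a_def subspace_diff subspace_scale)
  ultimately have "B a c = 0" by (rule iso[rotated])
  then have "\<beta> = t * \<gamma>" by (simp add: a_def expand \<beta>_def \<gamma>_def)
  with Baa \<open>B a a = 0\<close> have "B x x = t * \<beta>" by (simp add: algebra_simps)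
  with \<open>\<beta> = t * \<gamma>\<close> show ?thesis by (simp add: \<beta>_def \<gamma>_def)
qed

lemma projection_orthogonal_hyperbolic:
  assumes "hyperbolic_on {..<n} e f"
  obtains p where "\<And>x. p x \<in> orthogonal (e ` {..<n} \<union> f ` {..<n})"
    and "\<And>x y. y \<in> orthogonal (e ` {..<n} \<union> f ` {..<n}) \<Longrightarrow> B (p x) y = B x y"
    and "\<And>x. B x x = B (p x) (p x) + (\<Sum>i<n. B x (2 *s e i) * B x (f i))"
proof
  have ef: "B (e i) (e j) = 0" "B (f i) (f j) = 0" "B (e i) (f j) = of_bool (i = j)"
    "B (f j) (e i) = of_bool (i = j)" if "i < n" "j < n" for i j
    using assms that symmetric[of "f j" "e i"] by (auto simp: hyperbolic_on_def)
  define h where "h x = (\<Sum>i<n. B x (f i) *s e i + B x (e i) *s f i)" for x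
  have h_orth: "B (h x) y = 0" if "y \<in> orthogonal (e ` {..<n} \<union> f ` {..<n})" for x y
    using that by (simp add: h_def expand orthogonal_def symmetric[of _ y])
  have Bh: "B (h x) (e j) = B x (e j)" "B (h x) (f j) = B x (f j)" if "j < n" for x j
    using that by (simp_all add: h_def expand ef)
  show "x - h x \<in> orthogonal (e ` {..<n} \<union> f ` {..<n})" for x
    by (auto simp: orthogonal_def diff_left Bh)
  show "B (x - h x) y = B x y" if "y \<in> orthogonal (e ` {..<n} \<union> f ` {..<n})" for x y
    using h_orth[OF that] by (simp add: diff_left)
  show "B x x = B (x - h x) (x - h x) + (\<Sum>i<n. B x (2 *s e i) * B x (f i))" for x
  proof -
    have "B (h x) x - B (h x) (h x) = 0"
      using h_orth[OF \<open>x - h x \<in> _\<close>] by (simp add: diff_right)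
    then have "B x x - B (x - h x) (x - h x) = B x (h x)"
      by (simp add: diff_left diff_right)
    also have "\<dots> = (\<Sum>i<n. B x (f i) * B x (e i) + B x (e i) * B x (f i))"
      by (simp add: h_def sum_right add_right scale_right)
    also have "\<dots> = (\<Sum>i<n. B x (2 *s e i) * B x (f i))"
      by (simp add: scale_right mult.commute mult.left_commute flip: mult_2)
    finally show ?thesis by (simp add: algebra_simps)
  qed
qed

lemma finite_strength_if_no_hyperbolic_pair:
  assumes sqrt: "\<And>d::'k. \<exists>r. r * r = d" and hyp: "hyperbolic_on {..<n} e f"
    and no_pair: "\<And>a b. a \<in> orthogonal (e ` {..<n} \<union> f ` {..<n}) \<Longrightarrow>
                          b \<in> orthogonal (e ` {..<n} \<union> f ` {..<n}) \<Longrightarrow> B a a = 0 \<Longrightarrow> B a b = 0"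
  shows "\<exists>m. strength_le (*s) (\<lambda>x. B x x) m"
proof -
  define K where "K = orthogonal (e ` {..<n} \<union> f ` {..<n})"
  have K: "subspace K" by (simp add: K_def subspace_orthogonal)
  obtain p where pK: "\<And>x. p x \<in> K" and p_orth: "\<And>x y. y \<in> K \<Longrightarrow> B (p x) y = B x y"
    and q: "\<And>x. B x x = B (p x) (p x) + (\<Sum>i<n. B x (2 *s e i) * B x (f i))"
    using projection_orthogonal_hyperbolic[OF hyp] unfolding K_def by blast
  have "strength_le (*s) (\<lambda>x. \<Sum>i<n. B x (2 *s e i) * B x (f i)) (n * 1)"
    by (rule strength_le_sum) (rule strength_le_mult[OF linear_form_left linear_form_left])
  then have rest: "strength_le (*s) (\<lambda>x. \<Sum>i<n. B x (2 *s e i) * B x (f i)) n" by simp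
  show ?thesis
  proof (cases "\<exists>c\<in>K. B c c \<noteq> 0")
    case True
    then obtain c where c: "c \<in> K" "B c c \<noteq> 0" by blast
    have iso: "\<And>a. a \<in> K \<Longrightarrow> B a a = 0 \<Longrightarrow> B a c = 0" using no_pair c(1) by (auto simp: K_def)
    have "B (p x) (p x) = B x c * B x c / B c c" for x
      using diag_eq_square_if_isotropic_orthogonal[OF sqrt K c(1) pK c(2) iso] p_orth[OF c(1)] c(2)
      by (simp add: eq_divide_eq)
    then have "B x x = B x ((1 / B c c) *s c) * B x c + (\<Sum>i<n. B x (2 *s e i) * B x (f i))" for x
      using q[of x] by (simp add: scale_right)
    then have "(\<lambda>x. B x x) =
        (\<lambda>x. B x ((1 / B c c) *s c) * B x c + (\<Sum>i<n. B x (2 *s e i) * B x (f i)))"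
      by (rule ext)
    then show ?thesis
      using strength_le_add[OF strength_le_mult[OF linear_form_left linear_form_left] rest] by auto
  next
    case False
    with pK have "B x x = (\<Sum>i<n. B x (2 *s e i) * B x (f i))" for x
      using q[of x] by simp
    then have "(\<lambda>x. B x x) = (\<lambda>x. \<Sum>i<n. B x (2 *s e i) * B x (f i))"
      by (rule ext)
    with rest show ?thesis by auto
  qed
qed

lemma hyperbolic_pair_orthogonal:
  assumes sqrt: "\<And>d::'k. \<exists>r. r * r = d" and two: "(2::'k) \<noteq> 0"
    and nd: "nondegenerate (*s) (\<lambda>x. B x x)" and hyp: "hyperbolic_on {..<n} e f"
  shows "\<exists>a\<in>orthogonal (e ` {..<n} \<union> f ` {..<n}). \<exists>b\<in>orthogonal (e ` {..<n} \<union> f ` {..<n}).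
           B a a = 0 \<and> B b b = 0 \<and> B a b = 1"
proof -
  obtain a b where "a \<in> orthogonal (e ` {..<n} \<union> f ` {..<n})"
    and "b \<in> orthogonal (e ` {..<n} \<union> f ` {..<n})" and "B a a = 0" and "B a b \<noteq> 0"
    using finite_strength_if_no_hyperbolic_pair[OF sqrt hyp] nd by (auto simp: nondegenerate_iff)
  then show ?thesis
    using hyperbolic_pair_from_isotropic[OF two subspace_orthogonal] by blast
qed

lemma infinite_hyperbolic_family:
  assumes sqrt: "\<And>d::'k. \<exists>r. r * r = d" and two: "(2::'k) \<noteq> 0"
    and nd: "nondegenerate (*s) (\<lambda>x. B x x)"
  obtains E F where "hyperbolic_on UNIV E F"
proof -
  define P where "P g n ab \<longleftrightarrow>
    (let K = orthogonal (fst ` g ` {..<n} \<union> snd ` g ` {..<n})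
     in fst ab \<in> K \<and> snd ab \<in> K \<and> B (fst ab) (fst ab) = 0 \<and> B (snd ab) (snd ab) = 0 \<and> B (fst ab) (snd ab) = 1)"
    for g :: "nat \<Rightarrow> 'v \<times> 'v" and n ab
  have hyp: "hyperbolic_on I (fst \<circ> g) (snd \<circ> g)"
    if "\<And>m. m \<in> I \<Longrightarrow> P g m (g m)" "\<And>m i. m \<in> I \<Longrightarrow> i < m \<Longrightarrow> i \<in> I" for g I
    using that by (intro hyperbolic_onI) (auto simp: P_def orthogonal_def Let_def)
  have "\<exists>g. \<forall>n. P g n (g n)"
  proof (rule dependent_wellorder_choice)
    show "P g n ab = P g' n ab" if "\<And>m. m < n \<Longrightarrow> g m = g' m" for ab g g' n
    proof -
      have "g ` {..<n} = g' ` {..<n}" using that by (auto intro!: image_cong)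
      then show ?thesis by (simp add: P_def)
    qed
    show "\<exists>ab. P g n ab" if "\<And>m. m < n \<Longrightarrow> P g m (g m)" for g n
    proof -
      have "hyperbolic_on {..<n} (fst \<circ> g) (snd \<circ> g)" by (rule hyp) (use that in auto)
      from hyperbolic_pair_orthogonal[OF sqrt two nd this]
      show ?thesis unfolding P_def Let_def image_comp by (metis fst_conv snd_conv)
    qed
  qed
  then obtain g where "\<And>n. P g n (g n)" by blast
  then have "hyperbolic_on UNIV (fst \<circ> g) (snd \<circ> g)" by (intro hyp) auto
  then show ?thesis by (rule that)
qed

lemma gram_matrix_realisable:
  fixes G :: "nat \<Rightarrow> nat \<Rightarrow> 'k"
  assumes two: "(2::'k) \<noteq> 0" and hyp: "hyperbolic_on UNIV E F" and G: "\<And>i j. G i j = G j i"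
  shows "\<exists>\<phi>. \<forall>i j. B (\<phi> i) (\<phi> j) = G i j"
proof -
  have EE: "B (E i) (E j) = 0" and FF: "B (F i) (F j) = 0" and EF: "B (E i) (F j) = of_bool (i = j)"
    and FE: "B (F j) (E i) = of_bool (i = j)" for i j
    using hyp symmetric[of "F j" "E i"] by (auto simp: hyperbolic_on_def)
  define c where "c m n = (if m = n then G n n / 2 else G m n)" for m n
  define \<phi> where "\<phi> n = E n + (\<Sum>m\<le>n. c m n *s F m)" for n
  have "B (\<phi> i) (\<phi> j) = of_bool (i \<le> j) * c i j + of_bool (j \<le> i) * c j i" for i j
    by (simp add: \<phi>_def expand EE FF EF FE Int_def Collect_conv_if)
  then have "B (\<phi> i) (\<phi> j) = G i j" for i j
    using two G[of i j] by (cases i j rule: linorder_cases) (auto simp: c_def)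
  then show ?thesis by blast
qed

end

lemma linear_form_eq_on_span:
  assumes "linear_form s g" "linear_form s h" "x \<in> module.span s S" "\<And>b. b \<in> S \<Longrightarrow> g b = h b"
  shows "g x = h x"
proof -
  have "vector_space s" using assms(1) unfolding linear_form_def by (rule Vector_Spaces.linear.axioms(1))
  then interpret vector_space_pair s "(*)"
    using vector_space_mult by (simp add: vector_space_pair_def)
  show ?thesis using assms by (rule linear_eq_on[unfolded linear_form_def[symmetric]])
qed

definition coordinate_form ::
  "('k::field \<Rightarrow> 'v::ab_group_add \<Rightarrow> 'v) \<Rightarrow> 'v set \<Rightarrow> ('v \<Rightarrow> 'v \<Rightarrow> 'k) \<Rightarrow> 'v \<Rightarrow> 'v \<Rightarrow> 'k" where
  "coordinate_form s S c x y =
     (\<Sum>b1 | module.representation s S x b1 \<noteq> 0. \<Sum>b2 | module.representation s S y b2 \<noteq> 0.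
        c b1 b2 * module.representation s S x b1 * module.representation s S y b2)"

lemma coordinate_form_swap: "coordinate_form s S c x y = coordinate_form s S (\<lambda>b1 b2. c b2 b1) y x"
  unfolding coordinate_form_def by (subst sum.swap) (simp add: algebra_simps)

context vector_space
begin

context
  fixes S :: "'b set"
  assumes independent: "independent S" and spanning: "span S = UNIV"
begin

lemma coordinate_form_eq_sum:
  assumes "finite T" "{b. representation S x b \<noteq> 0} \<subseteq> T"
  shows "coordinate_form scale S c x y =
           (\<Sum>b1\<in>T. \<Sum>b2 | representation S y b2 \<noteq> 0. c b1 b2 * representation S x b1 * representation S y b2)"
  unfolding coordinate_form_def by (rule sum.mono_neutral_left) (use assms in auto)

lemma coordinate_form_add_left:
  "coordinate_form scale S c (x + x') y = coordinate_form scale S c x y + coordinate_form scale S c x' y"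
proof -
  let ?T = "{b. representation S x b \<noteq> 0} \<union> {b. representation S x' b \<noteq> 0}"
  have "finite ?T" by (simp add: finite_representation)
  moreover have "representation S (x + x') b = representation S x b + representation S x' b" for b
    using independent spanning by (simp add: representation_add)
  ultimately show ?thesis
    by (subst (1 2 3) coordinate_form_eq_sum[where T = ?T])
       (auto simp: algebra_simps sum.distrib)
qed

lemma coordinate_form_scale_left:
  "coordinate_form scale S c (t *s x) y = t * coordinate_form scale S c x y"
proof -
  let ?T = "{b. representation S x b \<noteq> 0}"
  have "finite ?T" by (simp add: finite_representation)
  moreover have "representation S (t *s x) b = t * representation S x b" for b
    using independent spanning by (simp add: representation_scale)
  ultimately show ?thesis
    by (subst (1 2) coordinate_form_eq_sum[where T = ?T])
       (auto simp: algebra_simps sum_distrib_left)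
qed

lemma coordinate_form_basis:
  assumes "b1 \<in> S" "b2 \<in> S"
  shows "coordinate_form scale S c b1 b2 = c b1 b2"
  using assms by (simp add: coordinate_form_def representation_basis[OF independent])

lemma symmetric_bilinear_form_coordinate_form:
  "symmetric_bilinear_form scale
     (\<lambda>x y. (coordinate_form scale S c x y + coordinate_form scale S (\<lambda>b1 b2. c b2 b1) x y) / 2)"
proof unfold_locales
  fix x y z t
  show "(coordinate_form scale S c x y + coordinate_form scale S (\<lambda>b1 b2. c b2 b1) x y) / 2 =
        (coordinate_form scale S c y x + coordinate_form scale S (\<lambda>b1 b2. c b2 b1) y x) / 2"
    by (simp add: coordinate_form_swap[of scale S c] add.commute)
qed (simp_all add: coordinate_form_add_left coordinate_form_scale_left add_divide_distrib algebra_simps)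

end

end

lemma P2_polarization:
  fixes s :: "'k::field \<Rightarrow> 'v::ab_group_add \<Rightarrow> 'v"
  assumes two: "(2::'k) \<noteq> 0" and "vector_space s" and basis: "is_basis s S"
    and q: "\<And>v. q v = (\<Sum>(b1, b2) \<in> {b. module.representation s S v b \<noteq> 0} \<times>
                                   {b. module.representation s S v b \<noteq> 0}.
                         c b1 b2 * module.representation s S v b1 * module.representation s S v b2)"
  obtains B where "symmetric_bilinear_form s B" and "q = (\<lambda>x. B x x)"
    and "\<And>b1 b2. b1 \<in> S \<Longrightarrow> b2 \<in> S \<Longrightarrow> B b1 b2 = (c b1 b2 + c b2 b1) / 2"
proof
  interpret vector_space s by fact
  have S: "independent S" "span S = UNIV" using basis by (auto simp: is_basis_def)
  let ?B = "\<lambda>x y. (coordinate_form s S c x y + coordinate_form s S (\<lambda>b1 b2. c b2 b1) x y) / 2"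
  show "symmetric_bilinear_form s ?B"
    using S by (rule symmetric_bilinear_form_coordinate_form)
  have "q x = coordinate_form s S c x x" for x
    by (simp add: q coordinate_form_def sum.cartesian_product)
  then show "q = (\<lambda>x. ?B x x)"
    using two by (simp add: fun_eq_iff coordinate_form_swap[of s S c])
  show "?B b1 b2 = (c b1 b2 + c b2 b1) / 2" if "b1 \<in> S" "b2 \<in> S" for b1 b2
    using S that by (simp add: coordinate_form_basis)
qed

lemma quadratic_space_polarization:
  assumes "(2::'k::field) \<noteq> 0" and "quadratic_space (s :: 'k \<Rightarrow> 'v::ab_group_add \<Rightarrow> 'v) q"
  obtains B where "symmetric_bilinear_form s B" and "q = (\<lambda>x. B x x)"
proof -
  obtain S c where "vector_space s" "is_basis s S" and
    q: "\<And>v. q v = (\<Sum>(b1, b2) \<in> {b. module.representation s S v b \<noteq> 0} \<times>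
                                   {b. module.representation s S v b \<noteq> 0}.
                         c b1 b2 * module.representation s S v b1 * module.representation s S v b2)"
    using assms(2) unfolding quadratic_space_def P2_def by blast
  from P2_polarization[OF assms(1) this] that show ?thesis by metis
qed

lemma linear_preserves_bilinear_form_if_on_basis:
  assumes W: "symmetric_bilinear_form sW BW" and V: "symmetric_bilinear_form sV BV"
    and \<phi>: "Vector_Spaces.linear sW sV \<phi>" and span: "module.span sW S = UNIV"
    and on_basis: "\<And>b1 b2. b1 \<in> S \<Longrightarrow> b2 \<in> S \<Longrightarrow> BV (\<phi> b1) (\<phi> b2) = BW b1 b2"
  shows "BV (\<phi> x) (\<phi> y) = BW x y"
proof -
  interpret W: symmetric_bilinear_form sW BW by fact
  interpret V: symmetric_bilinear_form sV BV by fact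
  interpret \<phi>: Vector_Spaces.linear sW sV \<phi> by fact
  have lin: "linear_form sW (\<lambda>x. BV (\<phi> x) (\<phi> z))" for z
    by (rule linear_formI) (auto simp: \<phi>.add \<phi>.scale V.expand intro: W.vector_space_axioms)
  have "BV (\<phi> b) (\<phi> y) = BW b y" if "b \<in> S" for b
    using linear_form_eq_on_span[OF lin W.linear_form_left, of y S] span that on_basis
    by (simp add: V.symmetric[of "\<phi> b"] W.symmetric[of b])
  then show ?thesis
    using linear_form_eq_on_span[OF lin W.linear_form_left, of x S] span by simp
qed

text \<open>Every countable-dimensional quadratic space embeds into every non-degenerate one: realise the
  Gram matrix of a countable basis inside an infinite hyperbolic family and extend linearly.\<close>
lemma embeds_into_nondegenerate:
  fixes sV :: "'k::field \<Rightarrow> 'v::ab_group_add \<Rightarrow> 'v" and sW :: "'k \<Rightarrow> 'w::ab_group_add \<Rightarrow> 'w"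
  assumes sqrt: "\<And>d::'k. \<exists>r. r * r = d" and two: "(2::'k) \<noteq> 0"
    and V: "quadratic_space sV qV" "nondegenerate sV qV"
    and W: "quadratic_space sW qW" "countable_dim sW"
  shows "embeds sW qW sV qV"
proof -
  obtain BV where BV: "symmetric_bilinear_form sV BV" and qV: "qV = (\<lambda>x. BV x x)"
    using quadratic_space_polarization[OF two V(1)] .
  obtain BW where BW: "symmetric_bilinear_form sW BW" and qW: "qW = (\<lambda>x. BW x x)"
    using quadratic_space_polarization[OF two W(1)] .
  interpret V: symmetric_bilinear_form sV BV by fact
  interpret W: symmetric_bilinear_form sW BW by fact
  interpret pair: vector_space_pair sW sV by unfold_locales
  obtain E F where "V.hyperbolic_on UNIV E F"
    using V.infinite_hyperbolic_family[OF sqrt two] V(2) qV by blast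
  obtain S where S: "is_basis sW S" "countable S" using W(2) by (auto simp: countable_dim_def)
  then obtain idx :: "'w \<Rightarrow> nat" where idx: "inj_on idx S" by (auto simp: countable_def)
  obtain \<psi> where \<psi>: "\<And>i j. BV (\<psi> i) (\<psi> j) = BW (inv_into S idx i) (inv_into S idx j)"
    using V.gram_matrix_realisable[OF two \<open>V.hyperbolic_on UNIV E F\<close>,
        where G = "\<lambda>i j. BW (inv_into S idx i) (inv_into S idx j)"] W.symmetric
    by blast
  have indep: "W.independent S" and span: "W.span S = UNIV" using S by (auto simp: is_basis_def)
  define \<phi> where "\<phi> = pair.construct S (\<psi> \<circ> idx)"
  have lin: "Vector_Spaces.linear sW sV \<phi>"
    unfolding \<phi>_def by (rule pair.linear_construct[OF indep])
  have "BV (\<phi> b1) (\<phi> b2) = BW b1 b2" if "b1 \<in> S" "b2 \<in> S" for b1 b2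
    using that idx by (simp add: \<phi>_def pair.construct_basis[OF indep] \<psi>)
  then have "BV (\<phi> x) (\<phi> x) = BW x x" for x
    by (rule linear_preserves_bilinear_form_if_on_basis[OF BW BV lin span])
  then show ?thesis unfolding embeds_def qV qW using lin by (intro exI[of _ \<phi>]) auto
qed

lemma vector_space_smult: "vector_space (smult :: 'k::field \<Rightarrow> 'k poly \<Rightarrow> 'k poly)"
  by unfold_locales (auto simp: smult_add_right smult_add_left)

lemma is_basis_monom: "is_basis smult (range (monom (1::'k::field)))"
proof -
  interpret vector_space "smult :: 'k \<Rightarrow> 'k poly \<Rightarrow> 'k poly" by (rule vector_space_smult)
  have "independent (range (monom (1::'k)))"
    unfolding independent_explicit_finite_subsets
  proof (intro allI impI ballI)
    fix T :: "'k poly set" and u v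
    assume T: "T \<subseteq> range (monom 1)" "finite T" "(\<Sum>v\<in>T. smult (u v) v) = 0" and "v \<in> T"
    then obtain k where k: "v = monom 1 k" by auto
    have "coeff w k = of_bool (w = v)" if "w \<in> T" for w
      using T(1) that by (auto simp: k coeff_monom monom_eq_iff')
    then have "coeff (\<Sum>v\<in>T. smult (u v) v) k = u v"
      using T(2) \<open>v \<in> T\<close> by (simp add: coeff_sum Int_def Collect_conv_if)
    with T(3) show "u v = 0" by simp
  qed
  moreover have "p \<in> span (range (monom 1))" for p :: "'k poly"
  proof -
    have "p = (\<Sum>i\<le>degree p. smult (coeff p i) (monom 1 i))"
      by (simp add: smult_monom poly_as_sum_of_monoms)
    also have "\<dots> \<in> span (range (monom 1))" by (intro span_sum span_scale span_base) auto
    finally show ?thesis .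
  qed
  ultimately show ?thesis by (auto simp: is_basis_def)
qed

lemma countable_dim_poly: "countable_dim (smult :: 'k::field \<Rightarrow> 'k poly \<Rightarrow> 'k poly)"
  unfolding countable_dim_def using is_basis_monom by blast

definition hyperbolic_coeff :: "'k::field poly \<Rightarrow> 'k poly \<Rightarrow> 'k" where
  "hyperbolic_coeff b1 b2 = of_bool (\<exists>i. b1 = monom 1 (2 * i) \<and> b2 = monom 1 (2 * i + 1))"

text \<open>The form \<open>x\<^sub>0 x\<^sub>1 + x\<^sub>2 x\<^sub>3 + \<dots>\<close> in the coordinates \<open>x\<^sub>i\<close> dual to the monomial basis.\<close>
definition hyperbolic_form :: "'k::field poly \<Rightarrow> 'k" where
  "hyperbolic_form v =
     (\<Sum>(b1, b2) \<in> {b. module.representation smult (range (monom 1)) v b \<noteq> 0} \<times>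
                   {b. module.representation smult (range (monom 1)) v b \<noteq> 0}.
        hyperbolic_coeff b1 b2 * module.representation smult (range (monom 1)) v b1
                               * module.representation smult (range (monom 1)) v b2)"

lemma quadratic_space_hyperbolic_form: "quadratic_space smult (hyperbolic_form :: 'k::field poly \<Rightarrow> 'k)"
  unfolding quadratic_space_def P2_def using vector_space_smult is_basis_monom
  by (intro conjI exI[of _ "range (monom 1)"] exI[of _ hyperbolic_coeff]) (auto simp: hyperbolic_form_def)

lemma nondegenerate_hyperbolic_form:
  assumes two: "(2::'k::field) \<noteq> 0"
  shows "nondegenerate smult (hyperbolic_form :: 'k poly \<Rightarrow> 'k)"
proof -
  obtain B :: "'k poly \<Rightarrow> 'k poly \<Rightarrow> 'k" where B: "symmetric_bilinear_form smult B"
    and q: "hyperbolic_form = (\<lambda>x. B x x)"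
    and B_monom: "\<And>b1 b2. b1 \<in> range (monom 1) \<Longrightarrow> b2 \<in> range (monom 1) \<Longrightarrow>
                    B b1 b2 = (hyperbolic_coeff b1 b2 + hyperbolic_coeff b2 b1) / 2"
    using P2_polarization[OF two vector_space_smult is_basis_monom hyperbolic_form_def] by blast
  interpret symmetric_bilinear_form smult B by fact
  have parity: "Suc (2 * a) \<noteq> 2 * b" "2 * b \<noteq> Suc (2 * a)" for a b :: nat
    by presburger+
  have "B (monom 1 (2 * i)) (monom 1 (2 * j)) = 0"
    and "B (monom 1 (2 * i + 1)) (monom 1 (2 * j + 1)) = 0"
    and "B (monom 1 (2 * i)) (smult 2 (monom 1 (2 * j + 1))) = of_bool (i = j)" for i j
    using two by (auto simp: scale_right B_monom hyperbolic_coeff_def monom_eq_iff' parity)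
  then have "hyperbolic_on UNIV (\<lambda>i. monom 1 (2 * i)) (\<lambda>i. smult 2 (monom 1 (2 * i + 1)))"
    using two by (simp add: hyperbolic_on_def scale_left scale_right)
  then show ?thesis unfolding q by (rule nondegenerate_if_hyperbolic_family[OF two])
qed

theorem corollary2p5:
  fixes sV :: "'k::alg_closed_field \<Rightarrow> 'v::ab_group_add \<Rightarrow> 'v"
    and sW :: "'k \<Rightarrow> 'w::ab_group_add \<Rightarrow> 'w"
  assumes "(2::'k) \<noteq> 0"
  shows "(\<exists>q :: 'k poly \<Rightarrow> 'k.
            quadratic_space smult q \<and> countable_dim (smult :: 'k \<Rightarrow> 'k poly \<Rightarrow> 'k poly)
            \<and> nondegenerate smult q)
       \<and> (\<forall>qV qW. quadratic_space sV qV \<and> countable_dim sV \<and> nondegenerate sV qV \<and>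
                  quadratic_space sW qW \<and> countable_dim sW \<and> nondegenerate sW qW
                  \<longrightarrow> isogenous sV qV sW qW)"
proof -
  have sqrt: "\<exists>r. r * r = d" for d :: 'k
    using nth_root_exists[of 2 d] by (auto simp: power2_eq_square)
  show ?thesis
    using quadratic_space_hyperbolic_form countable_dim_poly nondegenerate_hyperbolic_form[OF assms]
    by (auto simp: isogenous_def intro: embeds_into_nondegenerate[OF sqrt assms])
qed

end
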